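(* Let $G$ be a connected threshold graph of order $n\ge 4$ and size $m$ with $n-1<m<\binom{n}{2}$, with $c$ type 1 vertices, backwards zero position sequence $(b_1,\ldots,b_z)$ and $F_1=\sum_{i=1}^z b_i^2$. Define $(\mathrm{LW}''_k)_{k\in\mathbb{N}_0}$ by $\mathrm{LW}''_0=1$ and \[\mathrm{LW}''_k=c\,\mathrm{LW}''_{k-1}+\sum_{r=0}^{k-3}\mathrm{LW}''_r\sum_{q\in\mathbb{N}_0}\binom{k-3-r-q}{q}F_1\Big(\sum_{i=1}^z b_i\Big)^q\qquad(k\in\mathbb{N}).\] Then for every $k\ge 3$, \[\mathrm{LW}''_k-(c+1)\mathrm{LW}''_{k-1}+\Big(c-\sum_{i=1}^z b_i\Big)\mathrm{LW}''_{k-2}+\Big(c\sum_{i=1}^z b_i-F_1\Big)\mathrm{LW}''_{k-3}=0.\]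
   Context: A threshold graph is a simple graph whose vertices can be ordered $v_1,\ldots,v_n$ so that for each $2\le i\le n$, $v_i$ is either adjacent to all of $v_1,\ldots,v_{i-1}$ (then $a_i=1$) or to none of them (then $a_i=0$); by convention $a_1=1$. Vertex $v_i$ is of type 1 if $a_i=1$ and of type 0 if $a_i=0$; $c$ and $z$ are the numbers of type 1 and type 0 vertices. The backwards zero position sequence $(b_1,\ldots,b_z)$ is defined by letting $b_i$ be the number of type 1 vertices appearing after the $i$-th type 0 vertex in the order $v_1,\ldots,v_n$. Binomial coefficients $\binom{a}{q}$ with integer $a$ and $q\in\mathbb{N}_0$ are taken to be $0$ whenever $a<q$. *)

theory Defs
  imports Main
begin

text \<open>A finite simple graph: vertex list vs (distinct, giving an ordering v_1..v_n as
 vs!0 .. vs!(n-1)) and a symmetric irreflexive edge relation E on set vs.\<close>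
definition simple_graph_on :: "'a list \<Rightarrow> ('a \<Rightarrow> 'a \<Rightarrow> bool) \<Rightarrow> bool" where
  "simple_graph_on vs E \<longleftrightarrow> distinct vs \<and>
     (\<forall>u v. E u v \<longrightarrow> u \<in> set vs \<and> v \<in> set vs \<and> u \<noteq> v \<and> E v u)"

definition threshold_order :: "'a list \<Rightarrow> ('a \<Rightarrow> 'a \<Rightarrow> bool) \<Rightarrow> bool" where
  "threshold_order vs E \<longleftrightarrow> (\<forall>i. 1 \<le> i \<and> i < length vs \<longrightarrow>
     (\<forall>j<i. E (vs!i) (vs!j)) \<or> (\<forall>j<i. \<not> E (vs!i) (vs!j)))"

text \<open>Type of the vertex at (0-based) position i: a_1 = 1 by convention, otherwise 1 iff
 adjacent to all previous vertices.\<close>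
definition vtype1 :: "'a list \<Rightarrow> ('a \<Rightarrow> 'a \<Rightarrow> bool) \<Rightarrow> nat \<Rightarrow> bool" where
  "vtype1 vs E i \<longleftrightarrow> i = 0 \<or> (\<forall>j<i. E (vs!i) (vs!j))"

definition num_type1 :: "'a list \<Rightarrow> ('a \<Rightarrow> 'a \<Rightarrow> bool) \<Rightarrow> nat" where
  "num_type1 vs E = card {i. i < length vs \<and> vtype1 vs E i}"

definition bzp_seq :: "'a list \<Rightarrow> ('a \<Rightarrow> 'a \<Rightarrow> bool) \<Rightarrow> nat list" where
  "bzp_seq vs E = map (\<lambda>j. card {k. j < k \<and> k < length vs \<and> vtype1 vs E k})
     (filter (\<lambda>j. \<not> vtype1 vs E j) [0..<length vs])"

definition graph_connected :: "'a list \<Rightarrow> ('a \<Rightarrow> 'a \<Rightarrow> bool) \<Rightarrow> bool" where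
  "graph_connected vs E \<longleftrightarrow> (\<forall>u\<in>set vs. \<forall>v\<in>set vs. E\<^sup>*\<^sup>* u v)"

definition graph_size :: "('a \<Rightarrow> 'a \<Rightarrow> bool) \<Rightarrow> nat" where
  "graph_size E = card {{u, v} | u v. E u v}"

end

theory Submission
  imports Defs
begin

text \<open>Writing \<open>g t = \<Sum>q. C(t-q, q) S\<^sup>q\<close>, Pascal's rule gives the Fibonacci-type
recurrence \<open>g (t+2) = g (t+1) + S g t\<close>, hence the convolution \<open>B m = \<Sum>r<m. LW r g (m-1-r)\<close>
occurring in the definition of \<open>LW\<close> satisfies \<open>B (m+1) = LW m + B m + S B (m-1)\<close>.
Since \<open>LW j = c LW (j-1) + F B (j-2)\<close>, eliminating \<open>B\<close> from three consecutive
instances of this equation yields the linear recurrence.\<close>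

definition diag_binomial_sum :: "'a::comm_ring_1 \<Rightarrow> nat \<Rightarrow> 'a" where
  "diag_binomial_sum S t = (\<Sum>q\<le>t. of_nat ((t - q) choose q) * S ^ q)"

lemma diag_binomial_sum_upto:
  assumes "t \<le> N"
  shows "diag_binomial_sum S t = (\<Sum>q\<le>N. of_nat ((t - q) choose q) * S ^ q)"
  unfolding diag_binomial_sum_def
  by (rule sum.mono_neutral_left) (use assms in \<open>auto simp: binomial_eq_0\<close>)

lemma diag_binomial_sum_0 [simp]: "diag_binomial_sum S 0 = 1"
  by (simp add: diag_binomial_sum_def)

lemma diag_binomial_sum_1 [simp]: "diag_binomial_sum S (Suc 0) = 1"
  by (simp add: diag_binomial_sum_def)

lemma choose_diff_Suc_Suc:
  "(Suc t - q) choose Suc q = ((t - q) choose q) + ((t - q) choose Suc q)"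
  by (cases "q \<le> t") (simp_all add: Suc_diff_le)

lemma diag_binomial_sum_Suc_Suc:
  "diag_binomial_sum S (Suc (Suc t)) = diag_binomial_sum S (Suc t) + S * diag_binomial_sum S t"
proof -
  have shift: "diag_binomial_sum S (Suc u) =
      1 + (\<Sum>q\<le>N. of_nat ((u - q) choose Suc q) * S ^ Suc q)" if "u \<le> N" for u N
  proof -
    have "diag_binomial_sum S (Suc u) = (\<Sum>q\<le>Suc N. of_nat ((Suc u - q) choose q) * S ^ q)"
      by (rule diag_binomial_sum_upto) (use that in simp)
    also have "\<dots> = 1 + (\<Sum>q\<le>N. of_nat ((u - q) choose Suc q) * S ^ Suc q)"
      by (subst sum.atMost_Suc_shift) simp
    finally show ?thesis .
  qed
  have "diag_binomial_sum S (Suc (Suc t)) =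
      1 + (\<Sum>q\<le>Suc t. of_nat ((Suc t - q) choose Suc q) * S ^ Suc q)"
    by (rule shift) simp
  also have "\<dots> = 1 + (\<Sum>q\<le>Suc t. of_nat ((t - q) choose Suc q) * S ^ Suc q)
      + S * (\<Sum>q\<le>Suc t. of_nat ((t - q) choose q) * S ^ q)"
    by (simp add: choose_diff_Suc_Suc algebra_simps sum.distrib sum_distrib_left)
  also have "\<dots> = diag_binomial_sum S (Suc t) + S * diag_binomial_sum S t"
    using shift[of t "Suc t"] diag_binomial_sum_upto[of t "Suc t" S] by simp
  finally show ?thesis .
qed

definition diag_binomial_conv :: "'a::comm_ring_1 \<Rightarrow> (nat \<Rightarrow> 'a) \<Rightarrow> nat \<Rightarrow> 'a" where
  "diag_binomial_conv S L m = (\<Sum>r<m. L r * diag_binomial_sum S (m - 1 - r))"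

text \<open>For \<open>m = 0\<close> the last term vanishes because \<open>0 - 1 = 0\<close> and the empty sum is \<open>0\<close>.\<close>

lemma diag_binomial_conv_Suc:
  "diag_binomial_conv S L (Suc m) =
     L m + diag_binomial_conv S L m + S * diag_binomial_conv S L (m - 1)"
proof (cases m)
  case 0
  then show ?thesis by (simp add: diag_binomial_conv_def)
next
  case (Suc p)
  have step: "L r * diag_binomial_sum S (Suc p - r) =
      L r * diag_binomial_sum S (p - r) + S * (L r * diag_binomial_sum S (p - 1 - r))"
    if "r < p" for r
  proof -
    have "Suc p - r = Suc (Suc (p - 1 - r))" "p - r = Suc (p - 1 - r)"
      using that by simp_all
    then show ?thesis
      by (simp only: diag_binomial_sum_Suc_Suc) (simp add: algebra_simps)
  qed
  have "diag_binomial_conv S L (Suc (Suc p)) =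
      L (Suc p) + L p + (\<Sum>r<p. L r * diag_binomial_sum S (Suc p - r))"
    by (simp add: diag_binomial_conv_def)
  also have "\<dots> = L (Suc p) + (L p + (\<Sum>r<p. L r * diag_binomial_sum S (p - r)))
      + S * diag_binomial_conv S L p"
    by (simp add: step diag_binomial_conv_def sum.distrib sum_distrib_left algebra_simps)
  also have "L p + (\<Sum>r<p. L r * diag_binomial_sum S (p - r)) = diag_binomial_conv S L (Suc p)"
    by (simp add: diag_binomial_conv_def)
  finally show ?thesis
    using Suc by simp
qed

lemma linear_recurrence_from_conv_recurrence:
  fixes L :: "nat \<Rightarrow> 'a::comm_ring_1"
  assumes rec: "\<And>j. j \<ge> 1 \<Longrightarrow> L j = c * L (j - 1) + F * diag_binomial_conv S L (j - 2)"
  shows "L (t + 3) - (c + 1) * L (t + 2) + (c - S) * L (t + 1) + (c * S - F) * L t = 0"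
proof -
  have "L (t + 3) = c * L (t + 2) + F * diag_binomial_conv S L (Suc t)"
    and "L (t + 2) = c * L (t + 1) + F * diag_binomial_conv S L t"
    and "L (t + 1) = c * L t + F * diag_binomial_conv S L (t - 1)"
    using rec[of "t + 3"] rec[of "t + 2"] rec[of "t + 1"] by simp_all
  then have "L (t + 3) - (c + 1) * L (t + 2) + (c - S) * L (t + 1) + (c * S - F) * L t
      = F * (diag_binomial_conv S L (Suc t) - L t - diag_binomial_conv S L t
               - S * diag_binomial_conv S L (t - 1))"
    by (simp add: algebra_simps)
  then show ?thesis
    by (simp add: diag_binomial_conv_Suc)
qed

theorem lemma5p3:
  fixes vs :: "'a list" and E :: "'a \<Rightarrow> 'a \<Rightarrow> bool"
    and n m c :: nat and b :: "nat list" and F1 :: nat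
    and LW :: "nat \<Rightarrow> int" and k :: nat
  assumes "simple_graph_on vs E" and "threshold_order vs E" and "graph_connected vs E"
    and "n = length vs" and "m = graph_size E"
    and "n \<ge> 4" and "n - 1 < m" and "m < n choose 2"
    and "c = num_type1 vs E" and "b = bzp_seq vs E"
    and "F1 = (\<Sum>x\<leftarrow>b. x ^ 2)"
    and "LW 0 = 1"
    and rec: "\<And>j. j \<ge> 1 \<Longrightarrow> LW j = int c * LW (j - 1) +
           (\<Sum>r<j - 2. LW r * (\<Sum>q\<le>j - 3 - r.
              int ((j - 3 - r - q) choose q) * int F1 * int (sum_list b) ^ q))"
    and "k \<ge> 3"
  shows "LW k - int (c + 1) * LW (k - 1) + (int c - int (sum_list b)) * LW (k - 2)
           + (int c * int (sum_list b) - int F1) * LW (k - 3) = 0"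
proof -
  let ?S = "int (sum_list b)"
  have "LW j = int c * LW (j - 1) + int F1 * diag_binomial_conv ?S LW (j - 2)"
    if "j \<ge> 1" for j
  proof -
    have "j - 2 - 1 - r = j - 3 - r" for r by simp
    then show ?thesis
      using rec[OF that]
      by (simp add: diag_binomial_conv_def diag_binomial_sum_def sum_distrib_left algebra_simps)
  qed
  then have "LW (k - 3 + 3) - (int c + 1) * LW (k - 3 + 2) + (int c - ?S) * LW (k - 3 + 1)
      + (int c * ?S - int F1) * LW (k - 3) = 0"
    by (rule linear_recurrence_from_conv_recurrence)
  moreover have "k - 3 + 3 = k" "k - 3 + 2 = k - 1" "k - 3 + 1 = k - 2"
    using \<open>k \<ge> 3\<close> by simp_all
  ultimately show ?thesis
    by (simp add: add.commute)
qed

end
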